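(* Let $\mathcal{H}$ be a hypertree, $T$ a host tree of $\mathcal{H}$, and $B$ a basic set of $\mathcal{H}$. Then the number of edges $e$ of $T$ with $I_\mathcal{H}(e)=B$ equals $\alpha_B-1$.
   Context: A hypergraph $\mathcal{H}$ has a finite vertex set $V(\mathcal{H})$ and a finite family of nonempty subsets (edges). A host tree is a tree on $V(\mathcal{H})$ in which every edge induces a connected subgraph; a hypertree is a hypergraph with a host tree. For $V'\subseteq V(\mathcal{H})$, $I_\mathcal{H}(V')$ is the intersection of all edges containing $V'$, or $V(\mathcal{H})$ if none does; for a tree edge $e=xy$, $I_\mathcal{H}(e)=I_\mathcal{H}(\{x,y\})$. For $A\subseteq V(\mathcal{H})$, $\overline{\mathcal{H}_A}$ is the hypergraph on $V(\mathcal{H})$ whose edges are the edges of $\mathcal{H}$ not containing $A$. The 2-section of a hypergraph is the graph on its vertices where two distinct vertices are adjacent iff some edge contains both. For a basic set $B$, $A(B)$ is the set of connected components of the 2-section of $\overline{\mathcal{H}_B}$ containing at least one vertex of $B$, and $\alpha_B=|A(B)|$. A union of sets is connected if the intersection graph of the sets is connected. $Comp(\mathcal{H})$ is the hypergraph without repeated edges on $V(\mathcal{H})$ whose edges are $V(\mathcal{H})$, all singletons, and all proper subsets obtainable from edges of $\mathcal{H}$ by repeated nonempty intersections and connected unions; a basic set is an edge of $Comp(\mathcal{H})$ with more than one vertex that is not a connected union of strictly smaller edges of $Comp(\mathcal{H})$. *)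

theory Defs
  imports Main
begin

text \<open>A hypergraph is given by a finite vertex set V and a family E of nonempty
subsets of V (repeated edges are irrelevant for all notions below).\<close>

definition hypergraph :: "'a set \<Rightarrow> 'a set set \<Rightarrow> bool" where
  "hypergraph V E \<longleftrightarrow> finite V \<and> (\<forall>e\<in>E. e \<noteq> {} \<and> e \<subseteq> V)"

definition adj_on :: "'a set set \<Rightarrow> 'a set \<Rightarrow> ('a \<times> 'a) set" where
  "adj_on T S = {(x, y). {x, y} \<in> T \<and> x \<in> S \<and> y \<in> S}"

definition induces_connected :: "'a set set \<Rightarrow> 'a set \<Rightarrow> bool" where
  "induces_connected T S \<longleftrightarrow> (\<forall>x\<in>S. \<forall>y\<in>S. (x, y) \<in> (adj_on T S)\<^sup>*)"

definition is_tree :: "'a set \<Rightarrow> 'a set set \<Rightarrow> bool" where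
  "is_tree V T \<longleftrightarrow> finite V \<and>
     (\<forall>t\<in>T. \<exists>x y. t = {x, y} \<and> x \<noteq> y \<and> x \<in> V \<and> y \<in> V) \<and>
     induces_connected T V \<and> card T + 1 = card V"

definition host_tree :: "'a set \<Rightarrow> 'a set set \<Rightarrow> 'a set set \<Rightarrow> bool" where
  "host_tree V E T \<longleftrightarrow> is_tree V T \<and> (\<forall>e\<in>E. induces_connected T e)"

definition hypertree :: "'a set \<Rightarrow> 'a set set \<Rightarrow> bool" where
  "hypertree V E \<longleftrightarrow> hypergraph V E \<and> (\<exists>T. host_tree V E T)"

definition I_H :: "'a set \<Rightarrow> 'a set set \<Rightarrow> 'a set \<Rightarrow> 'a set" where
  "I_H V E V' = (if \<exists>e\<in>E. V' \<subseteq> e then \<Inter>{e\<in>E. V' \<subseteq> e} else V)"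

definition edges_not_containing :: "'a set set \<Rightarrow> 'a set \<Rightarrow> 'a set set" where
  "edges_not_containing E A = {e\<in>E. \<not> A \<subseteq> e}"

definition two_section :: "'a set \<Rightarrow> 'a set set \<Rightarrow> ('a \<times> 'a) set" where
  "two_section V E = {(x, y). x \<in> V \<and> y \<in> V \<and> x \<noteq> y \<and> (\<exists>e\<in>E. x \<in> e \<and> y \<in> e)}"

definition components :: "'a set \<Rightarrow> 'a set set \<Rightarrow> 'a set set" where
  "components V E = {{y\<in>V. (x, y) \<in> (two_section V E)\<^sup>*} | x. x \<in> V}"

definition A_of :: "'a set \<Rightarrow> 'a set set \<Rightarrow> 'a set \<Rightarrow> 'a set set" where
  "A_of V E B = {C \<in> components V (edges_not_containing E B). C \<inter> B \<noteq> {}}"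

definition alpha :: "'a set \<Rightarrow> 'a set set \<Rightarrow> 'a set \<Rightarrow> nat" where
  "alpha V E B = card (A_of V E B)"

definition connected_family :: "'a set set \<Rightarrow> bool" where
  "connected_family F \<longleftrightarrow>
     (\<forall>X\<in>F. \<forall>Y\<in>F. (X, Y) \<in> {(X, Y). X \<in> F \<and> Y \<in> F \<and> X \<inter> Y \<noteq> {}}\<^sup>*)"

inductive_set gen_sets :: "'a set set \<Rightarrow> 'a set set" for E where
  base: "e \<in> E \<Longrightarrow> e \<in> gen_sets E"
| inter: "X \<in> gen_sets E \<Longrightarrow> Y \<in> gen_sets E \<Longrightarrow> X \<inter> Y \<noteq> {} \<Longrightarrow> X \<inter> Y \<in> gen_sets E"
| union: "finite F \<Longrightarrow> F \<noteq> {} \<Longrightarrow> \<forall>X\<in>F. X \<in> gen_sets E \<Longrightarrow> connected_family F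
          \<Longrightarrow> \<Union>F \<in> gen_sets E"

definition Comp :: "'a set \<Rightarrow> 'a set set \<Rightarrow> 'a set set" where
  "Comp V E = {V} \<union> {{v} | v. v \<in> V} \<union> {X \<in> gen_sets E. X \<subset> V}"

definition basic_set :: "'a set \<Rightarrow> 'a set set \<Rightarrow> 'a set \<Rightarrow> bool" where
  "basic_set V E B \<longleftrightarrow> B \<in> Comp V E \<and> card B > 1 \<and>
     \<not> (\<exists>F. F \<noteq> {} \<and> F \<subseteq> {X \<in> Comp V E. X \<subset> B} \<and> connected_family F \<and> \<Union>F = B)"

end

theory Submission
  imports Defs
begin

text \<open>Every member of \<open>Comp(H)\<close>, in particular \<open>B\<close>, induces a subtree of \<open>T\<close> that contains
  \<open>I(e)\<close> for each tree edge \<open>e\<close> inside it. Hence the tree edges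
  \<open>e\<close> with \<open>I(e) = B\<close> are the \<open>|B| - 1\<close> tree edges inside \<open>B\<close> minus those covered by an
  edge of \<open>H\<close> not containing \<open>B\<close>. The covered ones form a forest on \<open>B\<close> whose components
  are exactly the traces on \<open>B\<close> of the components of the 2-section of the edges not containing
  \<open>B\<close>: such components are subtrees, intersections of subtrees are subtrees, and a tree edge
  inside a chained union of subtrees lies in one of them. A forest on \<open>|B|\<close> vertices with
  \<open>\<alpha>\<^sub>B\<close> components has \<open>|B| - \<alpha>\<^sub>B\<close> edges, which leaves \<open>\<alpha>\<^sub>B - 1\<close> edges.
  All counting rests on the fact that a subforest \<open>F\<close> of a tree satisfies
  \<open>|F| + #components = #vertices\<close>.\<close>

definition reach_class :: "'a set \<Rightarrow> ('a \<times> 'a) set \<Rightarrow> 'a \<Rightarrow> 'a set" where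
  "reach_class S R x = {y\<in>S. (x, y) \<in> R\<^sup>*}"

lemma reach_class_self: "x \<in> S \<Longrightarrow> x \<in> reach_class S R x"
  by (simp add: reach_class_def)

lemma reach_class_subset: "reach_class S R x \<subseteq> S"
  by (auto simp: reach_class_def)

lemma reach_class_eqI:
  assumes "sym R" and "(x, y) \<in> R\<^sup>*"
  shows "reach_class S R x = reach_class S R y"
proof -
  have "(y, x) \<in> R\<^sup>*" using assms by (meson sym_rtrancl symD)
  then show ?thesis using assms(2) unfolding reach_class_def by (auto intro: rtrancl_trans)
qed

lemma reach_class_eqD:
  assumes "y \<in> S" and "reach_class S R x = reach_class S R y"
  shows "(x, y) \<in> R\<^sup>*"
  using assms reach_class_self[of y S R] by (auto simp: reach_class_def)

lemma rtrancl_Un_pair_cases: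
  assumes "(x, y) \<in> (R \<union> {(a, b), (b, a)})\<^sup>*" and "sym R"
  shows "(x, y) \<in> R\<^sup>* \<or> (((x, a) \<in> R\<^sup>* \<or> (x, b) \<in> R\<^sup>*) \<and> ((y, a) \<in> R\<^sup>* \<or> (y, b) \<in> R\<^sup>*))"
proof -
  have "(u, v) \<in> R\<^sup>* \<Longrightarrow> (v, u) \<in> R\<^sup>*" for u v using assms(2) by (meson sym_rtrancl symD)
  then show ?thesis using assms(1) by (auto simp: rtrancl_insert)
qed

lemma card_reach_classes_Un_pair:
  assumes "finite S" and "sym R"
  shows "card (reach_class S R ` S) \<le> card (reach_class S (R \<union> {(a, b), (b, a)}) ` S) + 1"
proof -
  let ?R' = "R \<union> {(a, b), (b, a)}"
  let ?A = "reach_class S R ` S - {reach_class S R a}"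
  define f where "f C = S \<inter> ?R'\<^sup>* `` C" for C
  have R_R': "R\<^sup>* \<subseteq> ?R'\<^sup>*" by (rule rtrancl_mono) blast
  have f_class: "f (reach_class S R x) = reach_class S ?R' x" if "x \<in> S" for x
    using that R_R' by (auto simp: f_def reach_class_def intro: rtrancl_trans)
  have "inj_on f ?A"
  proof (rule inj_onI)
    fix C D assume C: "C \<in> ?A" and D: "D \<in> ?A" and "f C = f D"
    obtain x where x: "x \<in> S" "C = reach_class S R x" "C \<noteq> reach_class S R a"
      using C by blast
    obtain y where y: "y \<in> S" "D = reach_class S R y" "D \<noteq> reach_class S R a"
      using D by blast
    have "reach_class S ?R' x = reach_class S ?R' y"
      using \<open>f C = f D\<close> x y by (simp add: f_class)
    then have "(x, y) \<in> ?R'\<^sup>*" using y(1) by (rule reach_class_eqD[rotated])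
    moreover have "(x, a) \<notin> R\<^sup>*" "(y, a) \<notin> R\<^sup>*"
      using x y reach_class_eqI[OF assms(2)] by blast+
    ultimately have "(x, y) \<in> R\<^sup>*"
      using rtrancl_Un_pair_cases[OF _ assms(2)] assms(2)
      by (metis rtrancl_trans sym_rtrancl symD)
    then show "C = D" using x y reach_class_eqI[OF assms(2)] by simp
  qed
  moreover have "f ` ?A \<subseteq> reach_class S ?R' ` S" using f_class by auto
  ultimately have "card ?A \<le> card (reach_class S ?R' ` S)"
    using assms(1) by (simp add: card_inj_on_le)
  moreover have "card (reach_class S R ` S) \<le> card ?A + 1"
    by (cases "reach_class S R a \<in> reach_class S R ` S") (simp_all add: card_Diff_singleton_if)
  ultimately show ?thesis by linarith
qed

definition graph_components :: "'a set \<Rightarrow> 'a set set \<Rightarrow> 'a set set" where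
  "graph_components S F = reach_class S (adj_on F S) ` S"

lemma sym_adj_on: "sym (adj_on F S)"
  by (auto simp: sym_def adj_on_def insert_commute)

lemma adj_on_insert:
  "a \<in> S \<Longrightarrow> b \<in> S \<Longrightarrow> adj_on (insert {a, b} F) S = adj_on F S \<union> {(a, b), (b, a)}"
  by (auto simp: adj_on_def doubleton_eq_iff)

lemma card_graph_components_insert:
  assumes "finite S" and "a \<in> S" and "b \<in> S"
  shows "card (graph_components S F) \<le> card (graph_components S (insert {a, b} F)) + 1"
  unfolding graph_components_def adj_on_insert[OF assms(2,3)]
  using card_reach_classes_Un_pair[OF assms(1) sym_adj_on] .

lemma card_graph_components_empty:
  assumes "finite S"
  shows "card (graph_components S {}) = card S"
proof -
  have "adj_on {} S = {}" by (simp add: adj_on_def)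
  then have "graph_components S {} = (\<lambda>x. {x}) ` S"
    by (auto simp: graph_components_def reach_class_def)
  then show ?thesis by (simp add: card_image)
qed

lemma card_graph_components_le_add:
  assumes "finite S" and "finite D" and "\<forall>e\<in>D. \<exists>a b. e = {a, b} \<and> a \<in> S \<and> b \<in> S"
  shows "card (graph_components S F) \<le> card (graph_components S (F \<union> D)) + card D"
  using assms(2,3)
proof (induction D rule: finite_induct)
  case empty
  then show ?case by simp
next
  case (insert d D)
  then obtain a b where d: "d = {a, b}" "a \<in> S" "b \<in> S" by blast
  have "card (graph_components S (F \<union> D)) \<le> card (graph_components S (F \<union> insert d D)) + 1"
    using card_graph_components_insert[OF assms(1) d(2,3), of "F \<union> D"] d(1) by simp
  then show ?case using insert by simp
qed

lemma card_graph_components_eq_1_iff: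
  assumes "S \<noteq> {}"
  shows "card (graph_components S F) = 1 \<longleftrightarrow> induces_connected F S"
proof
  assume "card (graph_components S F) = 1"
  then obtain C where C: "graph_components S F = {C}" by (meson card_1_singletonE)
  show "induces_connected F S" unfolding induces_connected_def
  proof (intro ballI)
    fix x y assume "x \<in> S" "y \<in> S"
    then have "reach_class S (adj_on F S) x = reach_class S (adj_on F S) y"
      using C unfolding graph_components_def by blast
    then show "(x, y) \<in> (adj_on F S)\<^sup>*" by (rule reach_class_eqD[OF \<open>y \<in> S\<close>])
  qed
next
  assume "induces_connected F S"
  then have "graph_components S F = {S}"
    using assms by (auto simp: graph_components_def reach_class_def induces_connected_def)
  then show "card (graph_components S F) = 1" by simp
qed

lemma card_graph_components_pos:
  assumes "finite S" and "S \<noteq> {}"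
  shows "1 \<le> card (graph_components S F)"
  using assms by (simp add: graph_components_def Suc_le_eq card_gt_0_iff)

lemma card_graph_components_restrict:
  assumes "finite V" and "S \<subseteq> V" and "\<forall>e\<in>F. e \<subseteq> S"
  shows "card (graph_components V F) = card (graph_components S F) + card (V - S)"
proof -
  have adj: "adj_on F V = adj_on F S" using assms(2,3) by (auto simp: adj_on_def)
  have stays: "y \<in> S" if "(x, y) \<in> (adj_on F S)\<^sup>*" "x \<in> S" for x y
    using that by (induction rule: rtrancl_induct) (auto simp: adj_on_def)
  have isolated: "y = x" if "(x, y) \<in> (adj_on F S)\<^sup>*" "x \<notin> S" for x y
    using that by (cases rule: converse_rtranclE) (auto simp: adj_on_def)
  have "reach_class V (adj_on F S) x = reach_class S (adj_on F S) x" if "x \<in> S" for x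
    using that stays assms(2) by (auto simp: reach_class_def)
  moreover have "reach_class V (adj_on F S) x = {x}" if "x \<in> V - S" for x
    using that isolated by (auto simp: reach_class_def)
  moreover have "V = S \<union> (V - S)" using assms(2) by blast
  ultimately have "graph_components V F = graph_components S F \<union> (\<lambda>x. {x}) ` (V - S)"
    unfolding graph_components_def adj by (metis (no_types, lifting) image_Un image_cong)
  moreover have "graph_components S F \<inter> (\<lambda>x. {x}) ` (V - S) = {}"
    unfolding graph_components_def using reach_class_subset by fastforce
  moreover have "finite S" using assms(1,2) finite_subset by blast
  ultimately show ?thesis
    using assms(1) by (simp add: card_Un_disjoint graph_components_def card_image)
qed

lemma is_tree_finite_edges:
  assumes "is_tree V T"
  shows "finite T"
proof -
  have "T \<subseteq> Pow V" using assms by (fastforce simp: is_tree_def)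
  moreover have "finite V" using assms by (simp add: is_tree_def)
  ultimately show ?thesis by (rule finite_subset[OF _ finite_Pow_iff[THEN iffD2]])
qed

lemma is_tree_edgeE:
  assumes "is_tree V T" and "e \<in> T"
  obtains x y where "e = {x, y}" "x \<noteq> y" "x \<in> V" "y \<in> V"
  using assms by (auto simp: is_tree_def)

lemma is_tree_edge_subset: "is_tree V T \<Longrightarrow> e \<in> T \<Longrightarrow> e \<subseteq> V"
  by (auto simp: is_tree_def)

lemma is_tree_edge_neq: "is_tree V T \<Longrightarrow> {p, q} \<in> T \<Longrightarrow> p \<noteq> q"
  by (auto simp: is_tree_def doubleton_eq_iff)

lemma card_graph_components_subforest:
  assumes T: "is_tree V T" and "F \<subseteq> T"
  shows "card F + card (graph_components V F) = card V"
proof -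
  have fin: "finite V" "finite T" using T is_tree_finite_edges by (simp_all add: is_tree_def)
  have pairs: "\<forall>e\<in>D. \<exists>a b. e = {a, b} \<and> a \<in> V \<and> b \<in> V" if "D \<subseteq> T" for D
    using that T unfolding is_tree_def by blast
  have fin_F: "finite F" "finite (T - F)" using finite_subset[OF assms(2) fin(2)] fin(2) by simp_all
  have "card V \<le> card (graph_components V ({} \<union> F)) + card F"
    using card_graph_components_le_add[OF fin(1) fin_F(1) pairs[OF assms(2)], of "{}"]
    by (simp add: card_graph_components_empty[OF fin(1)])
  moreover have "card (graph_components V F) \<le> card (graph_components V (F \<union> (T - F))) + card (T - F)"
    using card_graph_components_le_add[OF fin(1) fin_F(2) pairs] by blast
  moreover have "card (graph_components V T) = 1"
  proof -
    have "V \<noteq> {}" using T by (auto simp: is_tree_def)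
    then show ?thesis using T card_graph_components_eq_1_iff[of V T] by (simp add: is_tree_def)
  qed
  moreover have "card (T - F) + card F = card T"
    using assms(2) fin(2) fin_F(1) by (simp add: card_Diff_subset card_mono)
  moreover have "card T + 1 = card V" using T by (simp add: is_tree_def)
  moreover have "F \<union> (T - F) = T" using assms(2) by blast
  ultimately show ?thesis by simp
qed

lemma card_forest_in_tree:
  assumes T: "is_tree V T" and "F \<subseteq> T" and "S \<subseteq> V" and "\<forall>e\<in>F. e \<subseteq> S"
  shows "card F + card (graph_components S F) = card S"
proof -
  have "finite V" using T by (simp add: is_tree_def)
  then have "card V = card S + card (V - S)"
    using assms(3) by (metis card_Diff_subset card_mono finite_subset le_add_diff_inverse)
  then show ?thesis
    using card_graph_components_subforest[OF T assms(2)]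
      card_graph_components_restrict[OF \<open>finite V\<close> assms(3,4)] by simp
qed

definition edges_within :: "'a set set \<Rightarrow> 'a set \<Rightarrow> 'a set set" where
  "edges_within T S = {e\<in>T. e \<subseteq> S}"

lemma graph_components_edges_within: "graph_components S (edges_within T S) = graph_components S T"
proof -
  have "adj_on (edges_within T S) S = adj_on T S" by (auto simp: adj_on_def edges_within_def)
  then show ?thesis by (simp add: graph_components_def)
qed

lemma card_edges_within:
  assumes "is_tree V T" and "S \<subseteq> V"
  shows "card (edges_within T S) + card (graph_components S T) = card S"
proof -
  have "edges_within T S \<subseteq> T" and "\<forall>e\<in>edges_within T S. e \<subseteq> S"
    by (auto simp: edges_within_def)
  from card_forest_in_tree[OF assms(1) this(1) assms(2) this(2)] show ?thesis
    by (simp add: graph_components_edges_within)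
qed

lemma card_edges_within_subtree:
  assumes "is_tree V T" and "S \<subseteq> V" and "S \<noteq> {}" and "induces_connected T S"
  shows "card (edges_within T S) + 1 = card S"
proof -
  have "card (graph_components S T) = 1"
    using card_graph_components_eq_1_iff[OF assms(3)] assms(4) by simp
  then show ?thesis using card_edges_within[OF assms(1,2)] by simp
qed

text \<open>A connected subset spans the fewest possible tree edges; counting edges of
  \<open>X \<union> Y\<close> and \<open>X \<inter> Y\<close> by inclusion-exclusion forces \<open>X \<inter> Y\<close> to be connected too.\<close>

lemma subtree_Int:
  assumes T: "is_tree V T" and "X \<subseteq> V" and "Y \<subseteq> V"
    and "induces_connected T X" and "induces_connected T Y" and "X \<inter> Y \<noteq> {}"
  shows "induces_connected T (X \<inter> Y)"
proof -
  have fin: "finite (edges_within T S)" for S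
    using is_tree_finite_edges[OF T] by (simp add: edges_within_def)
  have "finite V" using T by (simp add: is_tree_def)
  then have "finite X" "finite Y" using assms(2,3) finite_subset by blast+
  have "card (edges_within T X) + 1 = card X" "card (edges_within T Y) + 1 = card Y"
    using card_edges_within_subtree[OF T] assms by auto
  moreover have "card (edges_within T (X \<union> Y)) + card (graph_components (X \<union> Y) T) = card (X \<union> Y)"
    "card (edges_within T (X \<inter> Y)) + card (graph_components (X \<inter> Y) T) = card (X \<inter> Y)"
    using card_edges_within[OF T, of "X \<union> Y"] card_edges_within[OF T, of "X \<inter> Y"] assms(2,3)
    by auto
  moreover have "1 \<le> card (graph_components (X \<union> Y) T)" "1 \<le> card (graph_components (X \<inter> Y) T)"
    using card_graph_components_pos[of "X \<union> Y"] card_graph_components_pos[of "X \<inter> Y"]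
      \<open>finite X\<close> \<open>finite Y\<close> assms(6) by auto
  moreover have "card X + card Y = card (X \<union> Y) + card (X \<inter> Y)"
    using card_Un_Int[OF \<open>finite X\<close> \<open>finite Y\<close>] .
  moreover have "card (edges_within T X) + card (edges_within T Y)
      \<le> card (edges_within T (X \<union> Y)) + card (edges_within T (X \<inter> Y))"
  proof -
    have "edges_within T X \<inter> edges_within T Y = edges_within T (X \<inter> Y)"
      by (auto simp: edges_within_def)
    moreover have "card (edges_within T X \<union> edges_within T Y) \<le> card (edges_within T (X \<union> Y))"
      by (rule card_mono[OF fin]) (auto simp: edges_within_def)
    ultimately show ?thesis using card_Un_Int[OF fin fin, of X Y] by simp
  qed
  ultimately have "card (graph_components (X \<inter> Y) T) = 1" by linarith
  then show ?thesis using card_graph_components_eq_1_iff[OF assms(6)] by simp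
qed

definition same_member :: "'a set set \<Rightarrow> ('a \<times> 'a) set" where
  "same_member F = {(x, y). \<exists>X\<in>F. x \<in> X \<and> y \<in> X}"

lemma sym_same_member: "sym (same_member F)"
  by (auto simp: sym_def same_member_def)

lemma connected_family_same_member:
  assumes "connected_family F"
  shows "\<forall>x\<in>\<Union>F. \<forall>y\<in>\<Union>F. (x, y) \<in> (same_member F)\<^sup>*"
proof (intro ballI)
  fix x y assume "x \<in> \<Union>F" "y \<in> \<Union>F"
  then obtain X Y where XY: "X \<in> F" "Y \<in> F" "x \<in> X" "y \<in> Y" by blast
  have "(X, Y) \<in> {(X, Y). X \<in> F \<and> Y \<in> F \<and> X \<inter> Y \<noteq> {}}\<^sup>*"
    using assms XY unfolding connected_family_def by blast
  then have "\<forall>y\<in>Y. (x, y) \<in> (same_member F)\<^sup>*"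
  proof (induction rule: rtrancl_induct)
    case base
    then show ?case using XY by (auto simp: same_member_def)
  next
    case (step Y Z)
    then obtain w where "w \<in> Y" "w \<in> Z" "Z \<in> F" by blast
    then have "(w, z) \<in> same_member F" if "z \<in> Z" for z
      using that by (auto simp: same_member_def)
    then show ?case using step.IH \<open>w \<in> Y\<close> by (meson rtrancl.rtrancl_into_rtrancl)
  qed
  then show "(x, y) \<in> (same_member F)\<^sup>*" using XY by blast
qed

lemma connected_chain_union:
  assumes "\<forall>X\<in>F. \<forall>a\<in>X. \<forall>b\<in>X. (a, b) \<in> (adj_on G U)\<^sup>*"
    and "\<forall>x\<in>U. \<forall>y\<in>U. (x, y) \<in> (same_member F)\<^sup>*"
  shows "induces_connected G U"
  unfolding induces_connected_def
proof (intro ballI)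
  fix x y assume "x \<in> U" "y \<in> U"
  then have "(x, y) \<in> (same_member F)\<^sup>*" using assms(2) by blast
  then show "(x, y) \<in> (adj_on G U)\<^sup>*"
  proof (induction rule: rtrancl_induct)
    case base
    then show ?case by simp
  next
    case (step y z)
    then obtain X where "X \<in> F" "y \<in> X" "z \<in> X" by (auto simp: same_member_def)
    then have "(y, z) \<in> (adj_on G U)\<^sup>*" using assms(1) by blast
    then show ?case using step.IH by (rule rtrancl_trans[rotated])
  qed
qed

lemma subtree_chain_union:
  assumes "\<forall>X\<in>F. X \<subseteq> U \<and> induces_connected T X"
    and "\<forall>x\<in>U. \<forall>y\<in>U. (x, y) \<in> (same_member F)\<^sup>*"
  shows "induces_connected T U"
proof (rule connected_chain_union[OF _ assms(2)], intro ballI)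
  fix X a b assume "X \<in> F" "a \<in> X" "b \<in> X"
  then have "(a, b) \<in> (adj_on T X)\<^sup>*" using assms(1) by (auto simp: induces_connected_def)
  moreover have "adj_on T X \<subseteq> adj_on T U" using assms(1) \<open>X \<in> F\<close> by (auto simp: adj_on_def)
  ultimately show "(a, b) \<in> (adj_on T U)\<^sup>*" using rtrancl_mono by blast
qed

text \<open>If no member contained \<open>e\<close>, then \<open>U\<close> would stay connected after deleting \<open>e\<close>,
  i.e.\ be spanned by fewer than \<open>card U - 1\<close> tree edges.\<close>

lemma subtree_chain_union_edge:
  assumes T: "is_tree V T" and "U \<subseteq> V"
    and F: "\<forall>X\<in>F. X \<subseteq> U \<and> induces_connected T X"
    and chain: "\<forall>x\<in>U. \<forall>y\<in>U. (x, y) \<in> (same_member F)\<^sup>*"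
    and "e \<in> T" and "e \<subseteq> U"
  shows "\<exists>X\<in>F. e \<subseteq> X"
proof (rule ccontr)
  assume none: "\<not> (\<exists>X\<in>F. e \<subseteq> X)"
  define G where "G = edges_within T U - {e}"
  have "induces_connected G U"
  proof (rule connected_chain_union[OF _ chain], intro ballI)
    fix X a b assume "X \<in> F" "a \<in> X" "b \<in> X"
    then have "(a, b) \<in> (adj_on T X)\<^sup>*" using F by (auto simp: induces_connected_def)
    moreover have "adj_on T X \<subseteq> adj_on G U"
      using F \<open>X \<in> F\<close> none by (auto simp: adj_on_def G_def edges_within_def)
    ultimately show "(a, b) \<in> (adj_on G U)\<^sup>*" using rtrancl_mono by blast
  qed
  moreover have "U \<noteq> {}" using is_tree_edgeE[OF T \<open>e \<in> T\<close>] \<open>e \<subseteq> U\<close> by blast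
  ultimately have "card (graph_components U G) = 1"
    using card_graph_components_eq_1_iff[of U G] by blast
  moreover have "card G + card (graph_components U G) = card U"
    by (rule card_forest_in_tree[OF T _ \<open>U \<subseteq> V\<close>]) (auto simp: G_def edges_within_def)
  moreover have "card (edges_within T U) + 1 = card U"
    using card_edges_within_subtree[OF T \<open>U \<subseteq> V\<close> \<open>U \<noteq> {}\<close> subtree_chain_union[OF F chain]] .
  moreover have "card G + 1 = card (edges_within T U)"
  proof -
    have "finite (edges_within T U)"
      using is_tree_finite_edges[OF T] by (simp add: edges_within_def)
    moreover have "e \<in> edges_within T U" using \<open>e \<in> T\<close> \<open>e \<subseteq> U\<close> by (simp add: edges_within_def)
    ultimately show ?thesis unfolding G_def by (metis card_Suc_Diff1 Suc_eq_plus1)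
  qed
  ultimately show False by simp
qed

lemma I_H_subset_edge: "h \<in> E \<Longrightarrow> e \<subseteq> h \<Longrightarrow> I_H V E e \<subseteq> h"
  by (auto simp: I_H_def)

lemma I_H_subset:
  assumes "\<forall>h\<in>E. h \<subseteq> V"
  shows "I_H V E e \<subseteq> V"
  using assms by (auto simp: I_H_def)

definition closed_subtree :: "'a set \<Rightarrow> 'a set set \<Rightarrow> 'a set set \<Rightarrow> 'a set \<Rightarrow> bool" where
  "closed_subtree V E T X \<longleftrightarrow>
     X \<subseteq> V \<and> X \<noteq> {} \<and> induces_connected T X \<and> (\<forall>e\<in>T. e \<subseteq> X \<longrightarrow> I_H V E e \<subseteq> X)"

lemma gen_sets_closed_subtree:
  assumes H: "hypergraph V E" and HT: "host_tree V E T" and "X \<in> gen_sets E"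
  shows "closed_subtree V E T X"
  using assms(3)
proof (induction rule: gen_sets.induct)
  case (base h)
  then show ?case
    using H HT I_H_subset_edge[OF base]
    by (auto simp: closed_subtree_def hypergraph_def host_tree_def)
next
  case (inter X Y)
  have "is_tree V T" using HT by (simp add: host_tree_def)
  moreover have "X \<subseteq> V" "Y \<subseteq> V" "induces_connected T X" "induces_connected T Y"
    using inter.IH by (simp_all add: closed_subtree_def)
  ultimately have "induces_connected T (X \<inter> Y)"
    using subtree_Int \<open>X \<inter> Y \<noteq> {}\<close> by blast
  then show ?case using inter by (auto simp: closed_subtree_def)
next
  case (union F)
  have T: "is_tree V T" using HT by (simp add: host_tree_def)
  have F: "\<forall>X\<in>F. X \<subseteq> \<Union>F \<and> induces_connected T X"
    using union.IH by (auto simp: closed_subtree_def)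
  note chain = connected_family_same_member[OF \<open>connected_family F\<close>]
  have "\<Union>F \<subseteq> V" "\<Union>F \<noteq> {}"
    using union.IH \<open>F \<noteq> {}\<close> by (auto simp: closed_subtree_def)
  moreover have "I_H V E e \<subseteq> \<Union>F" if e: "e \<in> T" "e \<subseteq> \<Union>F" for e
  proof -
    obtain X where "X \<in> F" "e \<subseteq> X"
      using subtree_chain_union_edge[OF T \<open>\<Union>F \<subseteq> V\<close> F chain e] by blast
    moreover from this have "I_H V E e \<subseteq> X"
      using union.IH \<open>e \<in> T\<close> by (simp add: closed_subtree_def)
    ultimately show ?thesis by blast
  qed
  ultimately show ?case using subtree_chain_union[OF F chain] by (simp add: closed_subtree_def)
qed

lemma Comp_closed_subtree:
  assumes H: "hypergraph V E" and HT: "host_tree V E T" and "B \<in> Comp V E"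
  shows "closed_subtree V E T B"
proof -
  have T: "is_tree V T" using HT by (simp add: host_tree_def)
  from \<open>B \<in> Comp V E\<close> consider "B = V" | v where "v \<in> V" "B = {v}" | "B \<in> gen_sets E"
    by (auto simp: Comp_def)
  then show ?thesis
  proof cases
    case 1
    have "V \<noteq> {}" "induces_connected T V" using T by (auto simp: is_tree_def)
    moreover have "I_H V E e \<subseteq> V" for e
      using H by (intro I_H_subset) (simp add: hypergraph_def)
    ultimately show ?thesis using 1 by (simp add: closed_subtree_def)
  next
    case 2
    have "\<not> e \<subseteq> {v}" if e: "e \<in> T" for e
    proof -
      obtain x y where "e = {x, y}" "x \<noteq> y" using is_tree_edgeE[OF T e] by blast
      then show ?thesis by auto
    qed
    then show ?thesis using 2 by (simp add: closed_subtree_def induces_connected_def)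
  next
    case 3
    then show ?thesis by (rule gen_sets_closed_subtree[OF H HT])
  qed
qed

definition covered_edges :: "'a set set \<Rightarrow> 'a set set \<Rightarrow> 'a set \<Rightarrow> 'a set set" where
  "covered_edges T F S = {e\<in>edges_within T S. \<exists>h\<in>F. e \<subseteq> h}"

lemma tree_edges_I_H_eq:
  assumes T: "is_tree V T" and "B \<subseteq> V" and closed: "\<forall>e\<in>T. e \<subseteq> B \<longrightarrow> I_H V E e \<subseteq> B"
  shows "{e\<in>T. I_H V E e = B} = edges_within T B - covered_edges T (edges_not_containing E B) B"
proof (intro equalityI subsetI)
  fix e assume "e \<in> {e\<in>T. I_H V E e = B}"
  then have "e \<in> T" "I_H V E e = B" by auto
  moreover from this have "e \<subseteq> B"
    using is_tree_edge_subset[OF T \<open>e \<in> T\<close>] by (auto simp: I_H_def)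
  ultimately show "e \<in> edges_within T B - covered_edges T (edges_not_containing E B) B"
    using I_H_subset_edge[of _ E e V]
    by (auto simp: edges_within_def covered_edges_def edges_not_containing_def)
next
  fix e assume "e \<in> edges_within T B - covered_edges T (edges_not_containing E B) B"
  then have "e \<in> T" "e \<subseteq> B" and "\<forall>h\<in>E. e \<subseteq> h \<longrightarrow> B \<subseteq> h"
    by (auto simp: edges_within_def covered_edges_def edges_not_containing_def)
  moreover from this have "B \<subseteq> I_H V E e" using \<open>B \<subseteq> V\<close> by (auto simp: I_H_def)
  ultimately show "e \<in> {e\<in>T. I_H V E e = B}" using closed by auto
qed

lemma sym_two_section: "sym (two_section V F)"
  by (auto simp: sym_def two_section_def)

lemma two_section_component_chain:
  assumes F: "\<forall>h\<in>F. h \<subseteq> V" and "u \<in> V"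
  defines "C \<equiv> reach_class V (two_section V F) u"
  shows "\<forall>X\<in>insert {u} {h\<in>F. h \<inter> C \<noteq> {}}. X \<subseteq> C"
    and "\<forall>x\<in>C. \<forall>y\<in>C. (x, y) \<in> (same_member (insert {u} {h\<in>F. h \<inter> C \<noteq> {}}))\<^sup>*"
proof -
  let ?R = "two_section V F" and ?Fam = "insert {u} {h\<in>F. h \<inter> C \<noteq> {}}"
  have "u \<in> C" unfolding C_def using \<open>u \<in> V\<close> by (rule reach_class_self)
  have closed: "z \<in> C" if "w \<in> C" "h \<in> F" "w \<in> h" "z \<in> h" for w h z
  proof (cases "z = w")
    case False
    with that F have "(w, z) \<in> ?R"
      unfolding C_def reach_class_def two_section_def by blast
    moreover have "(u, w) \<in> ?R\<^sup>*" using that(1) by (simp add: C_def reach_class_def)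
    ultimately have "(u, z) \<in> ?R\<^sup>*" by simp
    moreover have "z \<in> V" using F that(2,4) by blast
    ultimately show ?thesis by (simp add: C_def reach_class_def)
  qed (use that in simp)
  show "\<forall>X\<in>?Fam. X \<subseteq> C" using \<open>u \<in> C\<close> closed by blast
  have from_u: "(u, x) \<in> (same_member ?Fam)\<^sup>*" if "x \<in> C" for x
  proof -
    have "(u, x) \<in> ?R\<^sup>*" using that by (simp add: C_def reach_class_def)
    then show ?thesis
    proof (induction rule: rtrancl_induct)
      case (step x z)
      then obtain h where h: "h \<in> F" "x \<in> h" "z \<in> h" and "x \<in> V"
        by (auto simp: two_section_def)
      with step.hyps(1) have "x \<in> C" by (simp add: C_def reach_class_def)
      with h have "(x, z) \<in> same_member ?Fam" by (auto simp: same_member_def)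
      with step.IH show ?case by simp
    qed simp
  qed
  have "sym ((same_member ?Fam)\<^sup>*)" by (rule sym_rtrancl[OF sym_same_member])
  then show "\<forall>x\<in>C. \<forall>y\<in>C. (x, y) \<in> (same_member ?Fam)\<^sup>*"
    using from_u by (meson rtrancl_trans symD)
qed

lemma two_section_component_subtree:
  assumes T: "is_tree V T" and F: "\<forall>h\<in>F. h \<subseteq> V \<and> induces_connected T h" and "u \<in> V"
  defines "C \<equiv> reach_class V (two_section V F) u"
  shows "induces_connected T C" and "\<forall>e\<in>T. e \<subseteq> C \<longrightarrow> (\<exists>h\<in>F. e \<subseteq> h)"
proof -
  let ?Fam = "insert {u} {h\<in>F. h \<inter> C \<noteq> {}}"
  have "\<forall>h\<in>F. h \<subseteq> V" using F by blast
  note chain = two_section_component_chain[OF this \<open>u \<in> V\<close>, folded C_def]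
  have Fam: "\<forall>X\<in>?Fam. X \<subseteq> C \<and> induces_connected T X"
    using chain(1) F by (auto simp: induces_connected_def)
  show "induces_connected T C" by (rule subtree_chain_union[OF Fam chain(2)])
  show "\<forall>e\<in>T. e \<subseteq> C \<longrightarrow> (\<exists>h\<in>F. e \<subseteq> h)"
  proof (intro ballI impI)
    fix e assume e: "e \<in> T" "e \<subseteq> C"
    have "C \<subseteq> V" unfolding C_def by (rule reach_class_subset)
    then obtain X where "X \<in> ?Fam" "e \<subseteq> X"
      using subtree_chain_union_edge[OF T _ Fam chain(2) e] by blast
    moreover obtain x y where "e = {x, y}" "x \<noteq> y" using is_tree_edgeE[OF T \<open>e \<in> T\<close>] by blast
    ultimately show "\<exists>h\<in>F. e \<subseteq> h" by auto
  qed
qed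

lemma two_section_component_Int_subtree:
  assumes T: "is_tree V T" and F: "\<forall>h\<in>F. h \<subseteq> V \<and> induces_connected T h"
    and B: "B \<subseteq> V" "induces_connected T B" and "u \<in> B"
  shows "reach_class V (two_section V F) u \<inter> B = reach_class B (adj_on (covered_edges T F B) B) u"
proof
  let ?C = "reach_class V (two_section V F) u" and ?G = "adj_on (covered_edges T F B) B"
  have "u \<in> V" using B(1) \<open>u \<in> B\<close> by blast
  note C = two_section_component_subtree[OF T F \<open>u \<in> V\<close>]
  have "?G \<subseteq> two_section V F"
  proof
    fix pq assume "pq \<in> ?G"
    then obtain p q h where "pq = (p, q)" "{p, q} \<in> T" "p \<in> B" "q \<in> B" "h \<in> F" "p \<in> h" "q \<in> h"
      by (auto simp: adj_on_def covered_edges_def edges_within_def)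
    moreover from this have "p \<noteq> q" using is_tree_edge_neq[OF T] by blast
    ultimately show "pq \<in> two_section V F" using B(1) unfolding two_section_def by blast
  qed
  then have "?G\<^sup>* \<subseteq> (two_section V F)\<^sup>*" by (rule rtrancl_mono)
  then show "reach_class B ?G u \<subseteq> ?C \<inter> B" using B(1) by (auto simp: reach_class_def)
  show "?C \<inter> B \<subseteq> reach_class B ?G u"
  proof
    fix y assume y: "y \<in> ?C \<inter> B"
    have "u \<in> ?C \<inter> B" using reach_class_self[OF \<open>u \<in> V\<close>] \<open>u \<in> B\<close> by blast
    moreover from this have "induces_connected T (?C \<inter> B)"
      using subtree_Int[OF T reach_class_subset B(1) C(1) B(2)] by blast
    ultimately have "(u, y) \<in> (adj_on T (?C \<inter> B))\<^sup>*" using y by (simp add: induces_connected_def)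
    moreover have "adj_on T (?C \<inter> B) \<subseteq> ?G"
    proof
      fix pq assume "pq \<in> adj_on T (?C \<inter> B)"
      then obtain p q where pq: "pq = (p, q)" "{p, q} \<in> T" "{p, q} \<subseteq> ?C \<inter> B"
        by (auto simp: adj_on_def)
      moreover from this obtain h where "h \<in> F" "{p, q} \<subseteq> h" using C(2) by blast
      ultimately show "pq \<in> ?G" by (auto simp: adj_on_def covered_edges_def edges_within_def)
    qed
    ultimately have "(u, y) \<in> ?G\<^sup>*" using rtrancl_mono by blast
    then show "y \<in> reach_class B ?G u" using y by (simp add: reach_class_def)
  qed
qed

lemma card_components_meeting_subtree:
  assumes T: "is_tree V T" and F: "\<forall>h\<in>F. h \<subseteq> V \<and> induces_connected T h"
    and B: "B \<subseteq> V" "induces_connected T B"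
  shows "card {C\<in>components V F. C \<inter> B \<noteq> {}} = card (graph_components B (covered_edges T F B))"
proof -
  let ?K = "reach_class V (two_section V F)"
  have "components V F = ?K ` V" unfolding components_def reach_class_def by blast
  moreover have "{C\<in>?K ` V. C \<inter> B \<noteq> {}} = ?K ` B"
  proof (intro equalityI subsetI)
    fix C assume "C \<in> {C\<in>?K ` V. C \<inter> B \<noteq> {}}"
    then obtain x u where "C = ?K x" "u \<in> C" "u \<in> B" by blast
    then have "(x, u) \<in> (two_section V F)\<^sup>*" by (simp add: reach_class_def)
    then have "?K x = ?K u" by (rule reach_class_eqI[OF sym_two_section])
    with \<open>C = ?K x\<close> have "C = ?K u" by simp
    then show "C \<in> ?K ` B" using \<open>u \<in> B\<close> by blast
  next
    fix C assume "C \<in> ?K ` B"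
    then obtain u where "u \<in> B" "C = ?K u" by blast
    moreover from this have "u \<in> V" using B(1) by blast
    moreover from calculation have "u \<in> C" by (simp add: reach_class_self)
    ultimately show "C \<in> {C\<in>?K ` V. C \<inter> B \<noteq> {}}" by blast
  qed
  moreover have "inj_on (\<lambda>C. C \<inter> B) (?K ` B)"
  proof (rule inj_onI)
    fix C D assume "C \<in> ?K ` B" "D \<in> ?K ` B" and CD: "C \<inter> B = D \<inter> B"
    then obtain u v where uv: "u \<in> B" "C = ?K u" "D = ?K v" by blast
    moreover have "u \<in> V" using uv(1) B(1) by blast
    ultimately have "u \<in> C \<inter> B" by (simp add: reach_class_self)
    then have "u \<in> D" using CD by blast
    then have "(v, u) \<in> (two_section V F)\<^sup>*" using uv(3) by (simp add: reach_class_def)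
    then have "?K v = ?K u" by (rule reach_class_eqI[OF sym_two_section])
    then show "C = D" using uv by simp
  qed
  moreover have "(\<lambda>C. C \<inter> B) ` ?K ` B = graph_components B (covered_edges T F B)"
    using two_section_component_Int_subtree[OF T F B]
    by (simp add: graph_components_def image_image cong: image_cong)
  ultimately show ?thesis by (metis card_image)
qed

theorem mainTheorem14:
  fixes V :: "'a set" and E T :: "'a set set" and B :: "'a set"
  assumes "hypertree V E"
    and "host_tree V E T"
    and "basic_set V E B"
  shows "card {e \<in> T. I_H V E e = B} = alpha V E B - 1"
proof -
  have H: "hypergraph V E" using assms(1) by (simp add: hypertree_def)
  have T: "is_tree V T" using assms(2) by (simp add: host_tree_def)
  have "closed_subtree V E T B"
    using Comp_closed_subtree[OF H assms(2)] assms(3) by (simp add: basic_set_def)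
  then have B: "B \<subseteq> V" "B \<noteq> {}" "induces_connected T B" "\<forall>e\<in>T. e \<subseteq> B \<longrightarrow> I_H V E e \<subseteq> B"
    by (simp_all add: closed_subtree_def)
  let ?F = "edges_not_containing E B"
  let ?Fb = "covered_edges T ?F B"
  have F: "\<forall>h\<in>?F. h \<subseteq> V \<and> induces_connected T h"
    using H assms(2) by (auto simp: edges_not_containing_def hypergraph_def host_tree_def)
  have "?Fb \<subseteq> edges_within T B" by (auto simp: covered_edges_def)
  moreover have "finite (edges_within T B)"
    using is_tree_finite_edges[OF T] by (simp add: edges_within_def)
  ultimately have "card {e\<in>T. I_H V E e = B} = card (edges_within T B) - card ?Fb"
    unfolding tree_edges_I_H_eq[OF T B(1,4)] by (meson card_Diff_subset finite_subset)
  moreover have "card (edges_within T B) + 1 = card B"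
    by (rule card_edges_within_subtree[OF T B(1-3)])
  moreover have "card ?Fb + card (graph_components B ?Fb) = card B"
    by (rule card_forest_in_tree[OF T _ B(1)]) (auto simp: covered_edges_def edges_within_def)
  moreover have "card (graph_components B ?Fb) = alpha V E B"
    using card_components_meeting_subtree[OF T F B(1,3)] by (simp add: alpha_def A_of_def)
  ultimately show ?thesis by simp
qed

end
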